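(* (a) Let $m\ge2$ and let $T$ be a triangulation of a convex $m$-gon with vertices $1,\dots,m$ in counterclockwise order, equipped with an admissible labelling $(a_t)_{t\in T}$. For each vertex $i$ let $c_i$ be the sum of the labels $a_t$ of the triangles $t$ having $i$ as a vertex. Then $(c_1,\dots,c_m)$ is a quiddity cycle over $\mathbb{Z}$. (b) Every quiddity cycle over $\mathbb{Z}$ arises as in (a) from some triangulation with an admissible labelling.
   Context: $\eta(c)=\begin{pmatrix}c&-1\\1&0\end{pmatrix}$. A quiddity cycle over $\mathbb{Z}$ is $(c_1,\dots,c_m)\in\mathbb{Z}^m$ with $\eta(c_1)\cdots\eta(c_m)=-I$. A triangulation of an $m$-gon is a subdivision into $m-2$ triangles by non-crossing diagonals; for $m=2$ it has no triangles. A labelling of a triangulation $T$ assigns an integer $a_t$ to each triangle $t\in T$. Let $d$ be the number of negative labels plus half the number of labels equal to $0$; if $d$ is an integer, the sign of the labelling is $(-1)^d$. A labelling is admissible if: (i) the set of triangles $t$ with $a_t\notin\{1,-1\}$ is a disjoint union of two-element sets $\{t_1,t_2\}$ ("squares") with $t_1,t_2$ sharing an edge and $a_{t_1}=-a_{t_2}$; (ii) its sign is $1$, i.e. $d$ is an even integer. *)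

theory Defs
  imports "HOL-Analysis.Analysis"
begin

definition eta :: "int \<Rightarrow> int^2^2" where
  "eta c = vector [vector [c, -1], vector [1, 0]]"

definition quiddity_cycle :: "int list \<Rightarrow> bool" where
  "quiddity_cycle cs \<longleftrightarrow> foldr (**) (map eta cs) (mat 1) = - mat 1"

text \<open>Triangulations of a convex polygon whose vertices, in counterclockwise order,
  are listed in vs.  A triangle is represented by its set of three vertices.
  A 2-gon has the empty triangulation; for k >= 3 vertices v_0,...,v_{k-1}, the side
  v_0 v_{k-1} lies in exactly one triangle {v_0, v_j, v_{k-1}} (0<j<k-1), and the remaining
  triangles triangulate the polygons v_0..v_j and v_j..v_{k-1}.\<close>
inductive triangulation :: "nat list \<Rightarrow> nat set set \<Rightarrow> bool" where
  two: "triangulation [u, v] {}"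
| split: "\<lbrakk> 0 < j; j < length vs - 1;
            triangulation (take (Suc j) vs) T1; triangulation (drop j vs) T2 \<rbrakk>
          \<Longrightarrow> triangulation vs (insert {hd vs, vs ! j, last vs} (T1 \<union> T2))"

definition label_d :: "nat set set \<Rightarrow> (nat set \<Rightarrow> int) \<Rightarrow> rat" where
  "label_d T a = of_nat (card {t \<in> T. a t < 0}) + of_nat (card {t \<in> T. a t = 0}) / 2"

definition squares_condition :: "nat set set \<Rightarrow> (nat set \<Rightarrow> int) \<Rightarrow> bool" where
  "squares_condition T a \<longleftrightarrow>
     (\<exists>P. \<Union>P = {t \<in> T. a t \<notin> {1, -1}}
        \<and> (\<forall>p\<in>P. \<forall>q\<in>P. p \<noteq> q \<longrightarrow> p \<inter> q = {})
        \<and> (\<forall>p\<in>P. \<exists>t1 t2. p = {t1, t2} \<and> t1 \<noteq> t2 \<and> card (t1 \<inter> t2) = 2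
                           \<and> a t1 = - a t2))"

definition admissible :: "nat set set \<Rightarrow> (nat set \<Rightarrow> int) \<Rightarrow> bool" where
  "admissible T a \<longleftrightarrow> squares_condition T a \<and> (\<exists>k::int. label_d T a = of_int (2 * k))"

definition vertex_sums :: "nat \<Rightarrow> nat set set \<Rightarrow> (nat set \<Rightarrow> int) \<Rightarrow> int list" where
  "vertex_sums m T a = map (\<lambda>i. \<Sum>t\<in>{t \<in> T. i \<in> t}. a t) [1..<m+1]"

end

theory Submission
  imports Defs
begin

text \<open>
  Cutting a triangulated polygon along the triangle on its edge from the first to the last
  vertex expresses the product of the matrices \<open>eta c\<^sub>i\<close> through the products over the two
  sub-polygons, because \<open>eta (p + q) = - eta p * eta 0 * eta q\<close>.  By induction these are
  \<open>I\<close> or \<open>-I\<close>, with the sign determined by the negative and zero labels.  A root triangle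
  labelled \<open>1\<close> or \<open>-1\<close> contributes \<open>eta 1 ^ 3 = -I\<close> or \<open>eta (-1) ^ 3 = I\<close>; a root triangle
  labelled \<open>x\<close> in a square has its partner, labelled \<open>-x\<close>, as the root of one sub-polygon,
  and then \<open>eta x ^ 3\<close> and \<open>eta (-x) ^ 3\<close> cancel.

  For (b): a cycle with product \<open>I\<close> or \<open>-I\<close> and at least three entries has an entry
  \<open>1\<close>, \<open>-1\<close> or \<open>0\<close>, since otherwise the entries of the partial products grow.  Cutting off
  an ear (an entry \<open>e = \<plusminus>1\<close>, subtracted from both neighbours) or a square (an entry \<open>0\<close>,
  whose neighbours merge) leaves a shorter such cycle; realize it by induction and glue back
  a triangle labelled \<open>e\<close>, or two triangles labelled \<open>-b\<close> and \<open>b\<close>.  Triangulations are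
  invariant under rotation of the polygon, so the gluing can always happen at the last edge.
\<close>

section \<open>Products of the matrices eta\<close>

definition M2 :: "int \<Rightarrow> int \<Rightarrow> int \<Rightarrow> int \<Rightarrow> int^2^2" where
  "M2 a b c d = vector [vector [a, b], vector [c, d]]"

lemma M2_nth: "M2 a b c d $ 1 $ 1 = a" "M2 a b c d $ 1 $ 2 = b" "M2 a b c d $ 2 $ 1 = c" "M2 a b c d $ 2 $ 2 = d"
  by (simp_all add: M2_def)

lemma M2_eq_iff [simp]: "M2 a b c d = M2 a' b' c' d' \<longleftrightarrow> a = a' \<and> b = b' \<and> c = c' \<and> d = d'"
  by (metis M2_nth)

lemma M2_cases: obtains a b c d where "A = M2 a b c d"
  using that[of "A$1$1" "A$1$2" "A$2$1" "A$2$2"] by (simp add: vec_eq_iff forall_2 M2_nth)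

lemma M2_mult [simp]: "M2 a b c d ** M2 a' b' c' d' = M2 (a*a' + b*c') (a*b' + b*d') (c*a' + d*c') (c*b' + d*d')"
  by (simp add: M2_def matrix_matrix_mult_def vec_eq_iff forall_2 sum_2)

lemma uminus_M2 [simp]: "- M2 a b c d = M2 (-a) (-b) (-c) (-d)"
  by (simp add: M2_def vec_eq_iff forall_2)

lemma mat_M2: "mat k = M2 k 0 0 k"
  by (simp add: M2_def vec_eq_iff forall_2 mat_def)

lemma eta_M2: "eta c = M2 c (-1) 1 0"
  by (simp add: eta_def M2_def)

lemma mat_mult_mat: "(mat k :: int^2^2) ** mat l = mat (k * l)"
  by (simp add: mat_M2)

lemma mat_mult_commute: "mat k ** (A :: int^2^2) = A ** mat k"
  by (cases A rule: M2_cases) (simp add: mat_M2 algebra_simps)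

lemma uminus_mat: "- mat k = (mat (- k) :: int^2^2)"
  by (simp add: mat_M2)

definition prod_eta :: "int list \<Rightarrow> int^2^2" where
  "prod_eta cs = foldr (**) (map eta cs) (mat 1)"

lemma prod_eta_Nil [simp]: "prod_eta [] = mat 1"
  and prod_eta_Cons [simp]: "prod_eta (c # cs) = eta c ** prod_eta cs"
  by (simp_all add: prod_eta_def)

lemma prod_eta_append [simp]: "prod_eta (cs @ ds) = prod_eta cs ** prod_eta ds"
  by (induction cs) (simp_all add: matrix_mul_assoc)

lemma quiddity_cycle_iff: "quiddity_cycle cs \<longleftrightarrow> prod_eta cs = mat (-1)"
  by (simp add: quiddity_cycle_def prod_eta_def uminus_mat)

text \<open>The product over a polygon whose root triangle has label \<open>x\<close>, in terms of the
  products \<open>A\<close> and \<open>B\<close> over the two sub-polygons; the factors \<open>eta 0\<close> come from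
  \<open>eta (p + q) = - eta p ** eta 0 ** eta q\<close>.\<close>

definition root_join :: "int \<Rightarrow> int^2^2 \<Rightarrow> int^2^2 \<Rightarrow> int^2^2" where
  "root_join x A B = eta x ** eta 0 ** A ** eta 0 ** eta x ** eta 0 ** B ** eta 0 ** eta x"

lemma eta_add_as_root_join:
  "eta (x + p) ** X ** eta (x + q + r) ** Y ** eta (x + s) =
   root_join x (eta p ** X ** eta q) (eta r ** Y ** eta s)"
  by (cases X rule: M2_cases, cases Y rule: M2_cases) (simp add: root_join_def eta_M2 algebra_simps)

lemma root_join_mat: "root_join x (mat s) (mat t) = mat (s * t) ** prod_eta [x, x, x]"
  by (simp add: root_join_def mat_M2 eta_M2 algebra_simps)

lemma root_join_square_left:
  "root_join x (mat s ** prod_eta [-x, -x, -x]) (mat t) = mat (- (s * t))"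
  by (simp add: root_join_def mat_M2 eta_M2 algebra_simps)

lemma root_join_square_right:
  "root_join x (mat s) (mat t ** prod_eta [-x, -x, -x]) = mat (- (s * t))"
  by (simp add: root_join_def mat_M2 eta_M2 algebra_simps)

lemma prod_eta_unit_triangle: "prod_eta [1, 1, 1] = mat (-1)" "prod_eta [-1, -1, -1] = mat 1"
  by (simp_all add: mat_M2 eta_M2)

text \<open>Cutting off an ear may change the sign of the product, so part (b) is proved for
  products \<open>I\<close> and \<open>-I\<close> alike.\<close>

definition signed_quiddity :: "int list \<Rightarrow> bool" where
  "signed_quiddity cs \<longleftrightarrow> prod_eta cs = mat 1 \<or> prod_eta cs = mat (-1)"

lemma prod_eta_left_inverse: "\<exists>L. L ** prod_eta cs = mat 1"
proof (induction cs)
  case (Cons c cs)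
  then obtain L where L: "L ** prod_eta cs = mat 1" by blast
  have "M2 0 1 (-1) c ** eta c = mat 1" by (simp add: eta_M2 mat_M2)
  then have "(L ** M2 0 1 (-1) c) ** prod_eta (c # cs) = L ** prod_eta cs"
    by (metis matrix_mul_assoc matrix_mul_lid prod_eta_Cons)
  then show ?case using L by metis
qed auto

lemma signed_quiddity_swap:
  assumes "signed_quiddity (xs @ ys)" shows "signed_quiddity (ys @ xs)"
proof -
  obtain L where L: "L ** prod_eta xs = mat 1" using prod_eta_left_inverse by blast
  obtain s :: int where s: "prod_eta xs ** prod_eta ys = mat s" "s = 1 \<or> s = -1"
    using assms by (auto simp: signed_quiddity_def)
  have "prod_eta ys ** prod_eta xs = L ** (prod_eta xs ** prod_eta ys) ** prod_eta xs"
    by (simp add: matrix_mul_assoc L)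
  also have "\<dots> = mat s ** (L ** prod_eta xs)"
    by (simp add: s(1) mat_mult_commute[of s L] matrix_mul_assoc)
  also have "\<dots> = mat s"
    by (simp add: L)
  finally show ?thesis using s(2) by (auto simp: signed_quiddity_def)
qed

lemma signed_quiddity_rotate: "signed_quiddity cs \<Longrightarrow> signed_quiddity (rotate r cs)"
  by (metis append_take_drop_id rotate_drop_take signed_quiddity_swap)

lemma signed_quiddity_replace_suffix:
  assumes "prod_eta xs = prod_eta ys \<or> prod_eta xs = - prod_eta ys" "signed_quiddity (cs @ xs)"
  shows "signed_quiddity (cs @ ys)"
proof -
  have "prod_eta cs ** (- B) = - (prod_eta cs ** B)" for B :: "int^2^2"
    by (cases B rule: M2_cases, cases "prod_eta cs" rule: M2_cases) simp
  then show ?thesis using assms by (auto simp: signed_quiddity_def minus_equation_iff uminus_mat)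
qed

lemma signed_quiddity_contract_unit:
  assumes "e \<in> {1, -1}" "signed_quiddity (cs @ [p, e, q])"
  shows "signed_quiddity (cs @ [p - e, q - e])"
proof (rule signed_quiddity_replace_suffix[OF _ assms(2)])
  show "prod_eta [p, e, q] = prod_eta [p - e, q - e] \<or> prod_eta [p, e, q] = - prod_eta [p - e, q - e]"
    using assms(1) by (auto simp: eta_M2 mat_M2 algebra_simps)
qed

lemma signed_quiddity_contract_zero:
  "signed_quiddity (cs @ [p, 0, b, q]) \<Longrightarrow> signed_quiddity (cs @ [p + b, q])"
  by (erule signed_quiddity_replace_suffix[rotated]) (simp add: eta_M2 mat_M2 algebra_simps)

lemma not_signed_quiddity_singleton: "\<not> signed_quiddity [c]"
  by (simp add: signed_quiddity_def eta_M2 mat_M2)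

lemma signed_quiddity_pair: "signed_quiddity [c, d] \<Longrightarrow> c = 0 \<and> d = 0"
  by (auto simp: signed_quiddity_def eta_M2 mat_M2)

lemma signed_quiddity_triple: "signed_quiddity [c, d, e] \<Longrightarrow> d \<in> {1, -1}"
  by (auto simp: signed_quiddity_def eta_M2 mat_M2)

lemma prod_eta_dominant_entry:
  "cs \<noteq> [] \<Longrightarrow> \<forall>c\<in>set cs. 2 \<le> \<bar>c\<bar> \<Longrightarrow>
   \<bar>prod_eta cs $ 2 $ 1\<bar> < \<bar>prod_eta cs $ 1 $ 1\<bar> \<and> 2 \<le> \<bar>prod_eta cs $ 1 $ 1\<bar>"
proof (induction cs)
  case (Cons c cs)
  obtain p q r s where R: "prod_eta cs = M2 p q r s" by (rule M2_cases)
  have "\<forall>c\<in>set cs. 2 \<le> \<bar>c\<bar>" using Cons.prems by simp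
  then have rp: "\<bar>r\<bar> < \<bar>p\<bar> \<and> 1 \<le> \<bar>p\<bar>"
    using Cons.IH R by (cases "cs = []") (auto simp: mat_M2 M2_nth)
  have "2 * \<bar>p\<bar> \<le> \<bar>c\<bar> * \<bar>p\<bar>" using Cons.prems by (simp add: mult_right_mono)
  then have "\<bar>p\<bar> < \<bar>c * p\<bar> - \<bar>r\<bar>" using rp by (simp add: abs_mult)
  also have "\<dots> \<le> \<bar>c * p - r\<bar>" by (rule abs_triangle_ineq2)
  finally have "\<bar>p\<bar> < \<bar>c * p - r\<bar>" .
  then show ?case using rp by (simp add: R eta_M2 M2_nth)
qed simp

lemma not_signed_quiddity_large_entries:
  assumes "cs \<noteq> []" "\<forall>c\<in>set cs. c \<notin> {-1, 0, 1}"
  shows "\<not> signed_quiddity cs"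
proof -
  have "\<forall>c\<in>set cs. 2 \<le> \<bar>c\<bar>" using assms(2) by force
  then have "2 \<le> \<bar>prod_eta cs $ 1 $ 1\<bar>" using prod_eta_dominant_entry assms(1) by blast
  then show ?thesis by (auto simp: signed_quiddity_def mat_M2 M2_nth)
qed

section \<open>Triangulations\<close>

lemma triangulation_join:
  assumes "triangulation (u # A @ [w]) T1" "triangulation (w # B @ [v]) T2"
  shows "triangulation (u # A @ w # B @ [v]) (insert {u, w, v} (T1 \<union> T2))"
proof -
  let ?vs = "u # A @ w # B @ [v]"
  have "triangulation ?vs (insert {hd ?vs, ?vs ! Suc (length A), last ?vs} (T1 \<union> T2))"
    by (rule triangulation.split) (use assms in \<open>simp_all add: nth_append\<close>)
  then show ?thesis by (simp add: nth_append)
qed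

lemma split_at_inner_index:
  assumes "0 < j" "j < length vs - 1"
  obtains A B where "vs = hd vs # A @ vs ! j # B @ [last vs]"
    "take (Suc j) vs = hd vs # A @ [vs ! j]" "drop j vs = vs ! j # B @ [last vs]"
proof -
  define A where "A = tl (take j vs)"
  define B where "B = butlast (drop (Suc j) vs)"
  have take: "take j vs = hd vs # A"
    using assms by (cases vs; cases j) (simp_all add: A_def)
  have "drop (Suc j) vs \<noteq> []" "last (drop (Suc j) vs) = last vs"
    using assms by (simp_all add: last_drop)
  then have drop: "drop (Suc j) vs = B @ [last vs]"
    unfolding B_def by (metis append_butlast_last_id)
  have "vs = take j vs @ vs ! j # drop (Suc j) vs"
    using assms by (simp add: id_take_nth_drop)
  moreover have "take (Suc j) vs = take j vs @ [vs ! j]"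
    using assms by (simp add: take_Suc_conv_app_nth)
  moreover have "drop j vs = vs ! j # drop (Suc j) vs"
    using assms by (simp add: Cons_nth_drop_Suc)
  ultimately show ?thesis using that take drop by simp
qed

lemma triangulation_induct [consumes 1, case_names two join]:
  assumes "triangulation vs T"
    and "\<And>u v. P [u, v] {}"
    and "\<And>u A w B v T1 T2. triangulation (u # A @ [w]) T1 \<Longrightarrow> P (u # A @ [w]) T1 \<Longrightarrow>
           triangulation (w # B @ [v]) T2 \<Longrightarrow> P (w # B @ [v]) T2 \<Longrightarrow>
           P (u # A @ w # B @ [v]) (insert {u, w, v} (T1 \<union> T2))"
  shows "P vs T"
  using assms(1)
proof (induction rule: triangulation.induct)
  case (two u v)
  then show ?case by (rule assms(2))
next
  case (split j vs T1 T2)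
  obtain A B where "vs = hd vs # A @ vs ! j # B @ [last vs]"
    "take (Suc j) vs = hd vs # A @ [vs ! j]" "drop j vs = vs ! j # B @ [last vs]"
    using split.hyps(1,2) by (rule split_at_inner_index)
  then show ?case using assms(3) split.hyps(3,4) split.IH by metis
qed

lemma triangulation_cases [consumes 1, case_names two join]:
  assumes "triangulation vs T"
  obtains u v where "vs = [u, v]" "T = {}"
  | u A w B v T1 T2 where "vs = u # A @ w # B @ [v]" "triangulation (u # A @ [w]) T1"
      "triangulation (w # B @ [v]) T2" "T = insert {u, w, v} (T1 \<union> T2)"
  using assms by (induction rule: triangulation_induct) blast+

lemma triangulation_pair: "triangulation [u, v] T \<Longrightarrow> T = {}"
  by (erule triangulation_cases) auto

lemma triangulation_subset: "triangulation vs T \<Longrightarrow> t \<in> T \<Longrightarrow> t \<subseteq> set vs"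
  by (induction rule: triangulation_induct) auto

lemma triangulation_finite: "triangulation vs T \<Longrightarrow> finite T"
  by (induction rule: triangulation_induct) auto

lemma triangulation_card: "triangulation vs T \<Longrightarrow> distinct vs \<Longrightarrow> t \<in> T \<Longrightarrow> card t = 3"
  by (induction rule: triangulation_induct) auto

lemma append_pair_eq_iff: "xs @ [a, b] = ys @ [c, d] \<longleftrightarrow> xs = ys \<and> a = c \<and> b = d"
  using append1_eq_conv[of "xs @ [a]" b "ys @ [c]" d] by simp

lemma triangulation_glue:
  "triangulation (xs @ [a, b]) T1 \<Longrightarrow> triangulation (a # ys @ [b]) T2 \<Longrightarrow>
   triangulation (xs @ a # ys @ [b]) (T1 \<union> T2)"
proof (induction "xs @ [a, b]" T1 arbitrary: xs rule: triangulation_induct)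
  case (two u v)
  then show ?case by (simp add: Cons_eq_append_conv)
next
  case (join u A w B v S1 S2)
  show ?case
  proof (cases B rule: rev_exhaust)
    case Nil
    then have "xs = u # A" "w = a" "v = b"
      using join.hyps(5) append_pair_eq_iff[of "u # A" w v] by auto
    moreover have "S2 = {}" using join.hyps(3) Nil triangulation_pair by simp
    ultimately show ?thesis
      using triangulation_join[of u A a S1 ys b T2] join.hyps(1) join.prems by simp
  next
    case (snoc B' c)
    then have "xs = u # A @ w # B'" "c = a" "v = b"
      using join.hyps(5) append_pair_eq_iff[of "u # A @ w # B'" c v] by auto
    then have "triangulation (w # (B' @ a # ys) @ [b]) (S2 \<union> T2)"
      using join.hyps(4)[of "w # B'"] join.prems snoc by simp
    then show ?thesis
      using triangulation_join[OF join.hyps(1), of "B' @ a # ys" b] \<open>xs = u # A @ w # B'\<close> \<open>v = b\<close>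
      by (simp add: Un_assoc)
  qed
qed

lemma triangulation_glue_disjoint:
  assumes T1: "triangulation (xs @ [a, b]) T1" and T2: "triangulation (a # ys @ [b]) T2"
    and d: "distinct (xs @ a # ys @ [b])"
  shows "T1 \<inter> T2 = {}"
proof (rule ccontr)
  assume "T1 \<inter> T2 \<noteq> {}"
  then obtain t where t: "t \<in> T1" "t \<in> T2" by blast
  have "t \<subseteq> set (xs @ [a, b]) \<inter> set (a # ys @ [b])"
    using triangulation_subset[OF T1 t(1)] triangulation_subset[OF T2 t(2)] by blast
  also have "\<dots> = {a, b}" using d by auto
  finally have "card t \<le> card {a, b}" by (intro card_mono) auto
  also have "\<dots> \<le> 2" by (cases "a = b") simp_all
  finally have "card t \<le> 2" .
  moreover have "card t = 3" using triangulation_card[OF T2 _ t(2)] d by simp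
  ultimately show False by simp
qed

lemma triangulation_rotate1: "triangulation vs T \<Longrightarrow> triangulation (rotate1 vs) T"
proof (induction rule: triangulation_induct)
  case (two u v)
  then show ?case using triangulation.two by simp
next
  case (join u A w B v T1 T2)
  \<comment> \<open>the rotated polygon is the rotated left sub-polygon, glued along its last edge to the
    right sub-polygon extended by the root triangle\<close>
  have "triangulation (w # B @ [v] @ [u]) (insert {w, v, u} (T2 \<union> {}))"
    using triangulation_join[OF join.hyps(2), of "[]" u "{}"] triangulation.two[of v u] by simp
  moreover have "triangulation (A @ [w, u]) T1" using join.IH(1) by simp
  ultimately have "triangulation (A @ w # (B @ [v]) @ [u]) (T1 \<union> insert {w, v, u} T2)"
    using triangulation_glue[of A w u T1 "B @ [v]" "insert {w, v, u} T2"] by simp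
  then show ?case by (simp add: insert_commute)
qed

lemma triangulation_rotate: "triangulation vs T \<Longrightarrow> triangulation (rotate r vs) T"
  by (induction r) (simp_all add: triangulation_rotate1)

lemma join_children_not_adjacent:
  assumes "distinct (u # A @ w # B @ [v])" "triangulation (u # A @ [w]) T1"
    "triangulation (w # B @ [v]) T2" "s \<in> T1" "s' \<in> T2"
  shows "card (s \<inter> s') < 2"
proof -
  have "set (u # A @ [w]) \<inter> set (w # B @ [v]) = {w}" using assms(1) by auto
  then have "s \<inter> s' \<subseteq> {w}"
    using triangulation_subset[OF assms(2,4)] triangulation_subset[OF assms(3,5)] by blast
  then have "card (s \<inter> s') \<le> card {w}" by (intro card_mono) auto
  then show ?thesis by simp
qed

lemma join_children_disjoint:
  assumes "distinct (u # A @ w # B @ [v])" "triangulation (u # A @ [w]) T1" "triangulation (w # B @ [v]) T2"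
  shows "T1 \<inter> T2 = {}"
proof (rule ccontr)
  assume "T1 \<inter> T2 \<noteq> {}"
  then obtain t where "t \<in> T1" "t \<in> T2" by blast
  moreover have "distinct (u # A @ [w])" using assms(1) by auto
  ultimately show False
    using triangulation_card[OF assms(2)] join_children_not_adjacent[OF assms] by force
qed

lemma join_root_unique:
  assumes "distinct (u # A @ w # B @ [v])" "triangulation (u # A @ [w]) T1"
    "triangulation (w # B @ [v]) T2" "t \<in> insert {u, w, v} (T1 \<union> T2)" "u \<in> t" "v \<in> t"
  shows "t = {u, w, v}"
proof -
  have "t \<notin> T1" using assms(1,6) triangulation_subset[OF assms(2)] by auto
  moreover have "t \<notin> T2" using assms(1,5) triangulation_subset[OF assms(3)] by auto
  ultimately show ?thesis using assms(4) by blast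
qed

section \<open>Vertex sums, squares and weights\<close>

definition vertex_sum :: "nat set set \<Rightarrow> (nat set \<Rightarrow> int) \<Rightarrow> nat \<Rightarrow> int" where
  "vertex_sum T a v = (\<Sum>t\<in>{t \<in> T. v \<in> t}. a t)"

lemma vertex_sums_eq: "vertex_sums m T a = map (vertex_sum T a) [1..<m+1]"
  by (simp add: vertex_sums_def vertex_sum_def)

lemma vertex_sum_empty [simp]: "vertex_sum {} a v = 0"
  by (simp add: vertex_sum_def)

lemma vertex_sum_union:
  assumes "finite S" "finite T" "S \<inter> T = {}"
  shows "vertex_sum (S \<union> T) a v = vertex_sum S a v + vertex_sum T a v"
proof -
  have "{t \<in> S \<union> T. v \<in> t} = {t \<in> S. v \<in> t} \<union> {t \<in> T. v \<in> t}" by blast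
  then show ?thesis using assms unfolding vertex_sum_def by (simp add: sum.union_disjoint disjoint_iff)
qed

lemma vertex_sum_insert:
  "finite T \<Longrightarrow> t \<notin> T \<Longrightarrow> vertex_sum (insert t T) a v = (if v \<in> t then a t else 0) + vertex_sum T a v"
  unfolding vertex_sum_def by (cases "v \<in> t") (auto simp: insert_compr[symmetric] Collect_conj_eq)

lemma vertex_sum_outside: "\<forall>t\<in>T. v \<notin> t \<Longrightarrow> vertex_sum T a v = 0"
  unfolding vertex_sum_def by (intro sum.neutral) auto

lemma vertex_sum_cong: "\<forall>t\<in>T. a t = b t \<Longrightarrow> vertex_sum T a v = vertex_sum T b v"
  unfolding vertex_sum_def by (rule sum.cong) auto

lemma vertex_sum_outside_polygon: "triangulation vs T \<Longrightarrow> v \<notin> set vs \<Longrightarrow> vertex_sum T a v = 0"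
  using triangulation_subset by (blast intro: vertex_sum_outside)

lemma prod_eta_join:
  assumes d: "distinct (u # A @ w # B @ [v])"
    and T1: "triangulation (u # A @ [w]) T1" and T2: "triangulation (w # B @ [v]) T2"
  shows "prod_eta (map (vertex_sum (insert {u, w, v} (T1 \<union> T2)) a) (u # A @ w # B @ [v])) =
    root_join (a {u, w, v}) (prod_eta (map (vertex_sum T1 a) (u # A @ [w])))
      (prod_eta (map (vertex_sum T2 a) (w # B @ [v])))"
proof -
  define x where "x = a {u, w, v}"
  define s where "s = vertex_sum (insert {u, w, v} (T1 \<union> T2)) a"
  define s1 where "s1 = vertex_sum T1 a"
  define s2 where "s2 = vertex_sum T2 a"
  have fin: "finite T1" "finite T2" using T1 T2 by (simp_all add: triangulation_finite)
  have "{u, w, v} \<notin> T1" "{u, w, v} \<notin> T2"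
    using d triangulation_subset[OF T1] triangulation_subset[OF T2] by auto
  then have s: "s z = (if z \<in> {u, w, v} then x else 0) + s1 z + s2 z" for z
    using fin join_children_disjoint[OF d T1 T2]
    by (simp add: s_def s1_def s2_def x_def vertex_sum_insert vertex_sum_union)
  have s1_out: "s1 z = 0" if "z \<notin> set (u # A @ [w])" for z
    using vertex_sum_outside_polygon[OF T1 that] by (simp add: s1_def)
  have s2_out: "s2 z = 0" if "z \<notin> set (w # B @ [v])" for z
    using vertex_sum_outside_polygon[OF T2 that] by (simp add: s2_def)
  have "s z = s1 z" if "z \<in> set A" for z
    using d that by (auto simp: s intro!: s2_out)
  then have mapA: "map s A = map s1 A" by simp
  have "s z = s2 z" if "z \<in> set B" for z
    using d that by (auto simp: s intro!: s1_out)
  then have mapB: "map s B = map s2 B" by simp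
  have ends: "s u = x + s1 u" "s w = x + s1 w + s2 w" "s v = x + s2 v"
    using d by (auto simp: s s1_out s2_out)
  have "prod_eta (map s (u # A @ w # B @ [v])) =
      eta (x + s1 u) ** prod_eta (map s1 A) ** eta (x + s1 w + s2 w) ** prod_eta (map s2 B) ** eta (x + s2 v)"
    by (simp add: mapA mapB ends matrix_mul_assoc)
  also have "\<dots> = root_join x (eta (s1 u) ** prod_eta (map s1 A) ** eta (s1 w))
      (eta (s2 w) ** prod_eta (map s2 B) ** eta (s2 v))"
    by (rule eta_add_as_root_join)
  finally show ?thesis by (simp add: s_def s1_def s2_def x_def matrix_mul_assoc)
qed

definition square_partition :: "nat set set \<Rightarrow> (nat set \<Rightarrow> int) \<Rightarrow> nat set set set \<Rightarrow> bool" where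
  "square_partition T a P \<longleftrightarrow>
     \<Union>P = {t \<in> T. a t \<notin> {1, -1}} \<and> (\<forall>p\<in>P. \<forall>q\<in>P. p \<noteq> q \<longrightarrow> p \<inter> q = {}) \<and>
     (\<forall>p\<in>P. \<exists>t1 t2. p = {t1, t2} \<and> t1 \<noteq> t2 \<and> card (t1 \<inter> t2) = 2 \<and> a t1 = - a t2)"

lemma squares_condition_iff: "squares_condition T a \<longleftrightarrow> (\<exists>P. square_partition T a P)"
  by (simp add: squares_condition_def square_partition_def)

lemma square_partitionI:
  assumes "\<Union>P = {t \<in> T. a t \<notin> {1, -1}}" "\<And>p q. p \<in> P \<Longrightarrow> q \<in> P \<Longrightarrow> p \<noteq> q \<Longrightarrow> p \<inter> q = {}"
    "\<And>p. p \<in> P \<Longrightarrow> \<exists>t1 t2. p = {t1, t2} \<and> t1 \<noteq> t2 \<and> card (t1 \<inter> t2) = 2 \<and> a t1 = - a t2"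
  shows "square_partition T a P"
  unfolding square_partition_def using assms by simp

lemma square_partitionD:
  assumes "square_partition T a P"
  shows "\<Union>P = {t \<in> T. a t \<notin> {1, -1}}" "p \<in> P \<Longrightarrow> q \<in> P \<Longrightarrow> p \<noteq> q \<Longrightarrow> p \<inter> q = {}"
    "p \<in> P \<Longrightarrow> \<exists>t1 t2. p = {t1, t2} \<and> t1 \<noteq> t2 \<and> card (t1 \<inter> t2) = 2 \<and> a t1 = - a t2"
  using assms unfolding square_partition_def by simp_all

lemma square_partition_remove_unit:
  assumes "square_partition T a P" "r \<notin> \<Union>P"
  shows "square_partition (T - {r}) a P"
proof (rule square_partitionI)
  show "\<Union>P = {t \<in> T - {r}. a t \<notin> {1, -1}}"
    using assms square_partitionD(1)[OF assms(1)] by auto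
qed (simp_all add: square_partitionD(2,3)[OF assms(1)])

lemma square_partition_remove_square:
  assumes "square_partition T a P" "p \<in> P"
  shows "square_partition (T - p) a (P - {p})"
proof (rule square_partitionI)
  have "\<Union>(P - {p}) = \<Union>P - p"
    using square_partitionD(2)[OF assms(1) assms(2)] by blast
  then show "\<Union>(P - {p}) = {t \<in> T - p. a t \<notin> {1, -1}}"
    using square_partitionD(1)[OF assms(1)] by auto
qed (simp_all add: square_partitionD(2,3)[OF assms(1)])

lemma square_partition_cong:
  assumes "square_partition T a P" "\<forall>t\<in>T. a t = b t"
  shows "square_partition T b P"
proof (rule square_partitionI)
  have "{t \<in> T. b t \<notin> {1, -1}} = {t \<in> T. a t \<notin> {1, -1}}" using assms(2) by auto
  then show "\<Union>P = {t \<in> T. b t \<notin> {1, -1}}" using square_partitionD(1)[OF assms(1)] by simp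
  show "\<exists>t1 t2. p = {t1, t2} \<and> t1 \<noteq> t2 \<and> card (t1 \<inter> t2) = 2 \<and> b t1 = - b t2" if pP: "p \<in> P" for p
  proof -
    obtain t1 t2 where p: "p = {t1, t2}" "t1 \<noteq> t2" "card (t1 \<inter> t2) = 2" "a t1 = - a t2"
      using square_partitionD(3)[OF assms(1) pP] by blast
    have "t1 \<in> T" "t2 \<in> T" using square_partitionD(1)[OF assms(1)] pP p(1) by blast+
    then show ?thesis using p assms(2) by auto
  qed
qed (simp add: square_partitionD(2)[OF assms(1)])

lemma square_partition_split:
  assumes "square_partition (S1 \<union> S2) a P" "\<And>s s'. s \<in> S1 \<Longrightarrow> s' \<in> S2 \<Longrightarrow> card (s \<inter> s') < 2"
  shows "square_partition S1 a {p \<in> P. p \<subseteq> S1}"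
proof (rule square_partitionI)
  have "p \<subseteq> S1" if pP: "p \<in> P" and "p \<inter> S1 \<noteq> {}" for p
  proof -
    obtain t1 t2 where p: "p = {t1, t2}" "card (t1 \<inter> t2) = 2"
      using square_partitionD(3)[OF assms(1) pP] by blast
    have S: "t1 \<in> S1 \<union> S2" "t2 \<in> S1 \<union> S2" using square_partitionD(1)[OF assms(1)] pP p(1) by blast+
    have "t2 \<in> S1" if "t1 \<in> S1"
      using S(2) assms(2) that p(2) by fastforce
    moreover have "t1 \<in> S1" if "t2 \<in> S1"
      using S(1) assms(2) that p(2) Int_commute[of t1 t2] by fastforce
    ultimately show ?thesis using p(1) \<open>p \<inter> S1 \<noteq> {}\<close> by blast
  qed
  then show "\<Union>{p \<in> P. p \<subseteq> S1} = {t \<in> S1. a t \<notin> {1, -1}}"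
    using square_partitionD(1)[OF assms(1)] by blast
qed (simp_all add: square_partitionD(2,3)[OF assms(1)])

lemma square_partition_union:
  assumes "square_partition S a P" "square_partition T a Q" "S \<inter> T = {}"
  shows "square_partition (S \<union> T) a (P \<union> Q)"
proof (rule square_partitionI)
  show "\<Union>(P \<union> Q) = {t \<in> S \<union> T. a t \<notin> {1, -1}}"
    using square_partitionD(1)[OF assms(1)] square_partitionD(1)[OF assms(2)] by auto
  have PQ: "p \<inter> q = {}" if "p \<in> P" "q \<in> Q" for p q
  proof -
    have "p \<subseteq> S" "q \<subseteq> T"
      using that square_partitionD(1)[OF assms(1)] square_partitionD(1)[OF assms(2)] by blast+
    then show ?thesis using assms(3) by blast
  qed
  show "p \<inter> q = {}" if "p \<in> P \<union> Q" "q \<in> P \<union> Q" "p \<noteq> q" for p q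
    using that PQ[of p q] PQ[of q p] square_partitionD(2)[OF assms(1), of p q]
      square_partitionD(2)[OF assms(2), of p q] by (auto simp: Int_commute)
  show "\<exists>t1 t2. p = {t1, t2} \<and> t1 \<noteq> t2 \<and> card (t1 \<inter> t2) = 2 \<and> a t1 = - a t2" if "p \<in> P \<union> Q" for p
    using that square_partitionD(3)[OF assms(1), of p] square_partitionD(3)[OF assms(2), of p] by blast
qed

definition sign_weight :: "int \<Rightarrow> nat" where
  "sign_weight x = (if x < 0 then 2 else if x = 0 then 1 else 0)"

definition label_weight :: "nat set set \<Rightarrow> (nat set \<Rightarrow> int) \<Rightarrow> nat" where
  "label_weight T a = (\<Sum>t\<in>T. sign_weight (a t))"

lemma sign_weight_opposite: "sign_weight x + sign_weight (- x) = 2"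
  by (simp add: sign_weight_def)

lemma label_d_eq: "finite T \<Longrightarrow> label_d T a = of_nat (label_weight T a) / 2"
proof -
  assume fin: "finite T"
  have "label_weight T a = (\<Sum>t\<in>T. 2 * of_bool (a t < 0) + of_bool (a t = 0))"
    unfolding label_weight_def by (rule sum.cong) (auto simp: sign_weight_def)
  also have "\<dots> = 2 * card {t \<in> T. a t < 0} + card {t \<in> T. a t = 0}"
    using fin by (simp add: sum.distrib sum_distrib_left[symmetric] Int_def)
  finally show ?thesis by (simp add: label_d_def)
qed

lemma label_weight_union:
  "finite S \<Longrightarrow> finite T \<Longrightarrow> S \<inter> T = {} \<Longrightarrow> label_weight (S \<union> T) a = label_weight S a + label_weight T a"
  by (simp add: label_weight_def sum.union_disjoint)

lemma label_weight_remove: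
  "finite T \<Longrightarrow> t \<in> T \<Longrightarrow> label_weight T a = sign_weight (a t) + label_weight (T - {t}) a"
  by (simp add: label_weight_def sum.remove)

section \<open>Labelled triangulations give quiddity cycles\<close>

definition weight_sign :: "nat \<Rightarrow> int" where
  "weight_sign w = (-1) ^ (w div 2)"

lemma weight_sign_add: "even m \<Longrightarrow> even n \<Longrightarrow> weight_sign (m + n) = weight_sign m * weight_sign n"
  unfolding weight_sign_def by (elim evenE) (simp add: power_add)

lemma weight_sign_Suc_Suc: "weight_sign (Suc (Suc m)) = - weight_sign m"
  by (simp add: weight_sign_def)

definition product_by_weight :: "nat list \<Rightarrow> nat set set \<Rightarrow> (nat set \<Rightarrow> int) \<Rightarrow> bool" where
  "product_by_weight vs T a \<longleftrightarrow> even (label_weight T a) \<and>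
     prod_eta (map (vertex_sum T a) vs) = mat (- weight_sign (label_weight T a))"

text \<open>The root triangle \<open>r\<close> may form a square with a triangle outside \<open>T\<close>, namely with the
  root triangle of the enclosing polygon; so only \<open>T - {r}\<close> is assumed to be partitioned.\<close>

lemma prod_eta_open_root:
  assumes IH: "\<And>vs' T' P'. length vs' < length vs \<Longrightarrow> triangulation vs' T' \<Longrightarrow> distinct vs' \<Longrightarrow>
      square_partition T' a P' \<Longrightarrow> product_by_weight vs' T' a"
    and T: "triangulation vs T" and d: "distinct vs" and r: "r \<in> T" "hd vs \<in> r" "last vs \<in> r"
    and P: "square_partition (T - {r}) a P"
  shows "even (label_weight (T - {r}) a) \<and>
    prod_eta (map (vertex_sum T a) vs) = mat (weight_sign (label_weight (T - {r}) a)) ** prod_eta [a r, a r, a r]"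
  using T
proof (cases rule: triangulation_cases)
  case (two u v)
  then show ?thesis using r by simp
next
  case (join u A w B v T1 T2)
  have r_eq: "r = {u, w, v}"
    using join_root_unique[of u A w B v T1 T2 r] join d r by simp
  have "{u, w, v} \<notin> T1 \<union> T2"
    using d join triangulation_subset[OF join(2)] triangulation_subset[OF join(3)] by auto
  then have rest: "T - {r} = T1 \<union> T2" using join(4) r_eq by auto
  have adj: "card (s \<inter> s') < 2" if "s \<in> T1" "s' \<in> T2" for s s'
    using join_children_not_adjacent[of u A w B v T1 T2] join d that by simp
  then have adj': "card (s \<inter> s') < 2" if "s \<in> T2" "s' \<in> T1" for s s'
    using that by (simp add: Int_commute)
  have "square_partition T1 a {p \<in> P. p \<subseteq> T1}" "square_partition T2 a {p \<in> P. p \<subseteq> T2}"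
    using square_partition_split[of T1 T2 a P, OF _ adj] square_partition_split[of T2 T1 a P, OF _ adj'] P rest
    by (simp_all add: Un_commute)
  then have "product_by_weight (u # A @ [w]) T1 a" "product_by_weight (w # B @ [v]) T2 a"
    using IH join d by auto
  moreover have "label_weight (T - {r}) a = label_weight T1 a + label_weight T2 a"
    using rest join_children_disjoint[of u A w B v T1 T2] join d
    by (simp add: label_weight_union triangulation_finite)
  ultimately show ?thesis
    using prod_eta_join[of u A w B v T1 T2 a] join d r_eq
    by (auto simp: product_by_weight_def root_join_mat weight_sign_add)
qed

lemma square_partition_partner:
  assumes "square_partition T a P" "r \<in> \<Union>P"
  obtains t' where "{r, t'} \<in> P" "t' \<in> T" "t' \<noteq> r" "card (r \<inter> t') = 2" "a t' = - a r"
proof -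
  obtain p where p: "p \<in> P" "r \<in> p" using assms(2) by blast
  then obtain t1 t2 where t: "p = {t1, t2}" "t1 \<noteq> t2" "card (t1 \<inter> t2) = 2" "a t1 = - a t2"
    using square_partitionD(3)[OF assms(1)] by blast
  have "p \<subseteq> T" using square_partitionD(1)[OF assms(1)] p(1) by blast
  show ?thesis
  proof (cases "r = t1")
    case True
    then show ?thesis using that[of t2] t p \<open>p \<subseteq> T\<close> by auto
  next
    case False
    then have "r = t2" using t(1) p(2) by blast
    then show ?thesis using that[of t1] t p \<open>p \<subseteq> T\<close> by (auto simp: insert_commute Int_commute)
  qed
qed

lemma square_partition_at_root:
  assumes P: "square_partition (insert r (C \<union> D)) a P" and sq: "{r, t'} \<in> P" "t' \<in> C" "a t' = - a r"
    and disj: "r \<notin> C \<union> D" "C \<inter> D = {}" and fin: "finite C" "finite D"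
    and adj: "\<And>s s'. s \<in> C \<Longrightarrow> s' \<in> D \<Longrightarrow> card (s \<inter> s') < 2"
  shows "\<exists>P1. square_partition (C - {t'}) a P1" "\<exists>P2. square_partition D a P2"
    "label_weight (insert r (C \<union> D)) a = 2 + (label_weight (C - {t'}) a + label_weight D a)"
proof -
  have "insert r (C \<union> D) - {r, t'} = (C - {t'}) \<union> D" using disj sq(2) by auto
  then have P': "square_partition ((C - {t'}) \<union> D) a (P - {{r, t'}})"
    using square_partition_remove_square[OF P sq(1)] by simp
  have "card (s \<inter> s') < 2" if "s \<in> C - {t'}" "s' \<in> D" for s s'
    using adj that by simp
  then show "\<exists>P1. square_partition (C - {t'}) a P1"
    using square_partition_split[OF P'] by blast
  have "card (s \<inter> s') < 2" if "s \<in> D" "s' \<in> C - {t'}" for s s'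
    using adj[of s' s] that by (simp add: Int_commute)
  moreover have "square_partition (D \<union> (C - {t'})) a (P - {{r, t'}})"
    using P' by (simp add: Un_commute)
  ultimately show "\<exists>P2. square_partition D a P2"
    using square_partition_split by blast
  have "label_weight (insert r (C \<union> D)) a = sign_weight (a r) + (label_weight C a + label_weight D a)"
    using disj fin label_weight_union[of C D a] by (simp add: label_weight_def)
  also have "label_weight C a = sign_weight (a t') + label_weight (C - {t'}) a"
    using fin(1) sq(2) by (rule label_weight_remove)
  finally show "label_weight (insert r (C \<union> D)) a = 2 + (label_weight (C - {t'}) a + label_weight D a)"
    using sign_weight_opposite[of "a r"] sq(3) by simp
qed

lemma product_by_weight_unit_root:
  assumes IH: "\<And>vs' T' P'. length vs' < length vs \<Longrightarrow> triangulation vs' T' \<Longrightarrow> distinct vs' \<Longrightarrow>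
      square_partition T' a P' \<Longrightarrow> product_by_weight vs' T' a"
    and T: "triangulation vs T" and d: "distinct vs" and r: "r \<in> T" "hd vs \<in> r" "last vs \<in> r"
    and P: "square_partition T a P" "r \<notin> \<Union>P"
  shows "product_by_weight vs T a"
proof -
  have unit: "a r = 1 \<or> a r = -1" using square_partitionD(1)[OF P(1)] P(2) r(1) by auto
  have "even (label_weight (T - {r}) a) \<and> prod_eta (map (vertex_sum T a) vs) =
      mat (weight_sign (label_weight (T - {r}) a)) ** prod_eta [a r, a r, a r]"
    by (rule prod_eta_open_root[OF IH T d r square_partition_remove_unit[OF P]])
  moreover have "label_weight T a = sign_weight (a r) + label_weight (T - {r}) a"
    using T r(1) by (simp add: label_weight_remove triangulation_finite)
  moreover have "prod_eta [a r, a r, a r] = mat (if a r = 1 then -1 else 1)"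
    using unit prod_eta_unit_triangle by auto
  ultimately show ?thesis using unit
    by (auto simp: product_by_weight_def sign_weight_def mat_mult_mat weight_sign_Suc_Suc)
qed

lemma mem_of_card_inter_two:
  assumes "r \<inter> s \<subseteq> {x, y}" "card (r \<inter> s) = 2"
  shows "x \<in> s" "y \<in> s"
proof -
  have "card (r \<inter> s) \<le> card {x, y}" by (rule card_mono) (use assms(1) in auto)
  then have "card (r \<inter> s) = card {x, y}" using assms(2) by (cases "x = y") auto
  then have "r \<inter> s = {x, y}" using card_subset_eq[OF _ assms(1)] by simp
  then show "x \<in> s" "y \<in> s" by auto
qed

text \<open>Here \<open>C\<close> is the sub-polygon containing the partner \<open>t'\<close> of the root triangle \<open>r\<close>;
  it may be the left or the right one, hence the two possible products.\<close>

lemma product_by_weight_partner_in_child: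
  assumes IH: "\<And>vs' T' P'. length vs' < length vs \<Longrightarrow> triangulation vs' T' \<Longrightarrow> distinct vs' \<Longrightarrow>
      square_partition T' a P' \<Longrightarrow> product_by_weight vs' T' a"
    and C: "triangulation Q C" "distinct Q" "length Q < length vs"
    and D: "triangulation R D" "distinct R" "length R < length vs"
    and T: "T = insert r (C \<union> D)" "r \<notin> C \<union> D" "C \<inter> D = {}"
    and adj: "\<And>s s'. s \<in> C \<Longrightarrow> s' \<in> D \<Longrightarrow> card (s \<inter> s') < 2"
    and P: "square_partition T a P" "{r, t'} \<in> P" "t' \<in> C" "card (r \<inter> t') = 2" "a t' = - a r"
    and edge: "r \<inter> set Q \<subseteq> {hd Q, last Q}"
    and prod: "prod_eta (map (vertex_sum T a) vs) \<in>
      {root_join (a r) (prod_eta (map (vertex_sum C a) Q)) (prod_eta (map (vertex_sum D a) R)),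
       root_join (a r) (prod_eta (map (vertex_sum D a) R)) (prod_eta (map (vertex_sum C a) Q))}"
  shows "product_by_weight vs T a"
proof -
  have fin: "finite C" "finite D" using C(1) D(1) by (simp_all add: triangulation_finite)
  note at_root = square_partition_at_root[OF P(1)[unfolded T(1)] P(2,3,5) T(2,3) fin adj]
  obtain PC where PC: "square_partition (C - {t'}) a PC" using at_root(1) by blast
  obtain PD where PD: "square_partition D a PD" using at_root(2) by blast
  have W: "label_weight T a = 2 + (label_weight (C - {t'}) a + label_weight D a)"
    using at_root(3) T(1) by simp
  have "r \<inter> t' \<subseteq> {hd Q, last Q}" using edge triangulation_subset[OF C(1) P(3)] by blast
  note root = mem_of_card_inter_two[OF this P(4)]
  have IHQ: "product_by_weight vs' T' a"
    if "length vs' < length Q" "triangulation vs' T'" "distinct vs'" "square_partition T' a P'" for vs' T' P'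
    using IH[OF _ that(2-4)] that(1) C(3) by simp
  have "even (label_weight (C - {t'}) a) \<and> prod_eta (map (vertex_sum C a) Q) =
      mat (weight_sign (label_weight (C - {t'}) a)) ** prod_eta [- a r, - a r, - a r]"
    using prod_eta_open_root[OF IHQ C(1,2) P(3) root PC] P(5) by simp
  moreover have "product_by_weight R D a" using IH[OF D(3,1,2) PD] .
  ultimately have "root_join (a r) (prod_eta (map (vertex_sum C a) Q)) (prod_eta (map (vertex_sum D a) R)) =
      mat (- weight_sign (label_weight T a))"
    "root_join (a r) (prod_eta (map (vertex_sum D a) R)) (prod_eta (map (vertex_sum C a) Q)) =
      mat (- weight_sign (label_weight T a))"
    "even (label_weight T a)"
    using W unfolding product_by_weight_def
    by (simp_all del: prod_eta_Cons prod_eta_append add: root_join_square_left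
        root_join_square_right weight_sign_add weight_sign_Suc_Suc mult.commute)
  then show ?thesis using prod by (auto simp: product_by_weight_def)
qed

lemma product_by_weight_square_root:
  assumes IH: "\<And>vs' T' P'. length vs' < length vs \<Longrightarrow> triangulation vs' T' \<Longrightarrow> distinct vs' \<Longrightarrow>
      square_partition T' a P' \<Longrightarrow> product_by_weight vs' T' a"
    and vs: "vs = u # A @ w # B @ [v]" and T1: "triangulation (u # A @ [w]) T1"
    and T2: "triangulation (w # B @ [v]) T2" and T: "T = insert {u, w, v} (T1 \<union> T2)"
    and d: "distinct vs" and P: "square_partition T a P" "{u, w, v} \<in> \<Union>P"
  shows "product_by_weight vs T a"
proof -
  obtain t' where t': "{{u, w, v}, t'} \<in> P" "t' \<in> T" "t' \<noteq> {u, w, v}"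
      "card ({u, w, v} \<inter> t') = 2" "a t' = - a {u, w, v}"
    using square_partition_partner[OF P] by blast
  have d': "distinct (u # A @ w # B @ [v])" using d vs by simp
  have fresh: "{u, w, v} \<notin> T1 \<union> T2" "{u, w, v} \<notin> T2 \<union> T1"
    using d' triangulation_subset[OF T1] triangulation_subset[OF T2] by auto
  have disj: "T1 \<inter> T2 = {}" "T2 \<inter> T1 = {}"
    using join_children_disjoint[OF d' T1 T2] by auto
  have adj: "card (s \<inter> s') < 2" "card (s' \<inter> s) < 2" if "s \<in> T1" "s' \<in> T2" for s s'
    using join_children_not_adjacent[OF d' T1 T2 that] by (simp_all add: Int_commute)
  have prod: "prod_eta (map (vertex_sum T a) vs) = root_join (a {u, w, v})
      (prod_eta (map (vertex_sum T1 a) (u # A @ [w]))) (prod_eta (map (vertex_sum T2 a) (w # B @ [v])))"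
    using prod_eta_join[OF d' T1 T2] vs T by simp
  have edge: "{u, w, v} \<inter> set (u # A @ [w]) \<subseteq> {u, w}" "{u, w, v} \<inter> set (w # B @ [v]) \<subseteq> {w, v}"
    using d' by auto
  have shorter: "length (u # A @ [w]) < length vs" "length (w # B @ [v]) < length vs" using vs by simp_all
  have dist: "distinct (u # A @ [w])" "distinct (w # B @ [v])" using d' by auto
  from t'(2,3) T have "t' \<in> T1 \<or> t' \<in> T2" by simp
  then show ?thesis
  proof
    assume "t' \<in> T1"
    show ?thesis
      by (rule product_by_weight_partner_in_child[OF IH T1 dist(1) shorter(1) T2 dist(2) shorter(2)
            T fresh(1) disj(1) adj(1) P(1) t'(1) \<open>t' \<in> T1\<close> t'(4,5)])
        (use edge prod in simp_all)
  next
    assume "t' \<in> T2"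
    show ?thesis
      by (rule product_by_weight_partner_in_child[OF IH T2 dist(2) shorter(2) T1 dist(1) shorter(1)
            _ fresh(2) disj(2) adj(2) P(1) t'(1) \<open>t' \<in> T2\<close> t'(4,5)])
        (use edge prod T in \<open>simp_all add: Un_commute\<close>)
  qed
qed

lemma product_by_weight_triangulation:
  "triangulation vs T \<Longrightarrow> distinct vs \<Longrightarrow> square_partition T a P \<Longrightarrow> product_by_weight vs T a"
proof (induction "length vs" arbitrary: vs T P rule: less_induct)
  case less
  have IH: "\<And>vs' T' P'. length vs' < length vs \<Longrightarrow> triangulation vs' T' \<Longrightarrow> distinct vs' \<Longrightarrow>
      square_partition T' a P' \<Longrightarrow> product_by_weight vs' T' a"
    using less.hyps by blast
  from less.prems(1) show ?case
  proof (cases rule: triangulation_cases)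
    case (two u v)
    then show ?thesis
      by (simp add: product_by_weight_def label_weight_def weight_sign_def eta_M2 mat_M2)
  next
    case (join u A w B v T1 T2)
    show ?thesis
    proof (cases "{u, w, v} \<in> \<Union>P")
      case True
      show ?thesis by (rule product_by_weight_square_root[OF IH join less.prems(2,3) True])
    next
      case False
      have root: "{u, w, v} \<in> T" "hd vs \<in> {u, w, v}" "last vs \<in> {u, w, v}" using join by auto
      show ?thesis by (rule product_by_weight_unit_root[OF IH less.prems(1,2) root less.prems(3) False])
    qed
  qed
qed

lemma weight_sign_eq_one_iff: "even w \<Longrightarrow> weight_sign w = 1 \<longleftrightarrow> 4 dvd w"
  by (elim evenE) (auto simp: weight_sign_def minus_one_power_iff)

lemma half_eq_even_iff_four_dvd: "(\<exists>k::int. (of_nat w :: rat) / 2 = of_int (2 * k)) \<longleftrightarrow> 4 dvd w"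
proof
  assume "\<exists>k::int. (of_nat w :: rat) / 2 = of_int (2 * k)"
  then obtain k :: int where "(of_int (int w) :: rat) = of_int (4 * k)" by (auto simp: field_simps)
  then have "int w = 4 * k" by (simp only: of_int_eq_iff)
  then show "4 dvd w" by presburger
next
  assume "4 dvd w"
  then obtain q where "w = 4 * q" by blast
  then show "\<exists>k::int. (of_nat w :: rat) / 2 = of_int (2 * k)" by (intro exI[of _ "int q"]) simp
qed

lemma admissible_iff_weight:
  "finite T \<Longrightarrow> admissible T a \<longleftrightarrow> squares_condition T a \<and> 4 dvd label_weight T a"
  by (simp only: admissible_def label_d_eq half_eq_even_iff_four_dvd)

lemma quiddity_cycle_of_admissible:
  assumes "triangulation [1..<m+1] T" "admissible T a"
  shows "quiddity_cycle (vertex_sums m T a)"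
proof -
  obtain P where P: "square_partition T a P" and W: "4 dvd label_weight T a"
    using assms admissible_iff_weight squares_condition_iff triangulation_finite by blast
  have "product_by_weight [1..<m+1] T a"
    using product_by_weight_triangulation assms(1) P by simp
  moreover from this have "weight_sign (label_weight T a) = 1"
    using W weight_sign_eq_one_iff by (simp add: product_by_weight_def)
  ultimately show ?thesis
    by (simp add: product_by_weight_def quiddity_cycle_iff vertex_sums_eq)
qed

section \<open>Quiddity cycles come from labelled triangulations\<close>

definition realizable :: "nat list \<Rightarrow> int list \<Rightarrow> bool" where
  "realizable vs cs \<longleftrightarrow>
     (\<exists>T a P. triangulation vs T \<and> square_partition T a P \<and> cs = map (vertex_sum T a) vs)"

lemma realizable_rotate: "realizable vs cs \<Longrightarrow> realizable (rotate r vs) (rotate r cs)"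
  unfolding realizable_def by (metis rotate_map triangulation_rotate)

lemma rotate_inverse: "rotate (length xs - r mod length xs) (rotate r xs) = xs"
proof (cases "xs = []")
  case False
  have "(length xs - r mod length xs + r) mod length xs =
      (length xs - r mod length xs + r mod length xs) mod length xs"
    by (simp add: mod_add_right_eq)
  also have "\<dots> = 0" using False by simp
  finally show ?thesis by (simp add: rotate_rotate)
qed simp

lemma realizable_unrotate:
  assumes "realizable (rotate r vs) (rotate r cs)" "length vs = length cs"
  shows "realizable vs cs"
  using realizable_rotate[OF assms(1), of "length vs - r mod length vs"]
    rotate_inverse[of vs r] rotate_inverse[of cs r] assms(2)
  by simp

lemma realizable_glue:
  assumes R: "realizable (V @ [u, v]) (C @ [x, y])"
    and S: "triangulation (u # W @ [v]) S" "square_partition S b Q"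
    and d: "distinct (V @ u # W @ [v])"
  shows "realizable (V @ u # W @ [v])
    (C @ [x + vertex_sum S b u] @ map (vertex_sum S b) W @ [y + vertex_sum S b v])"
proof -
  obtain T a P where T: "triangulation (V @ [u, v]) T" "square_partition T a P"
      and cs: "C @ [x, y] = map (vertex_sum T a) (V @ [u, v])"
    using R unfolding realizable_def by blast
  define c where "c t = (if t \<in> S then b t else a t)" for t
  have "T \<inter> S = {}" using triangulation_glue_disjoint[OF T(1) S(1) d] .
  then have c: "\<forall>t\<in>T. a t = c t" "\<forall>t\<in>S. b t = c t" by (auto simp: c_def)
  have fin: "finite T" "finite S" using T(1) S(1) by (simp_all add: triangulation_finite)
  have "triangulation (V @ u # W @ [v]) (T \<union> S)"
    using triangulation_glue[OF T(1) S(1)] .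
  moreover have "square_partition (T \<union> S) c (P \<union> Q)"
    using square_partition_cong[OF T(2) c(1)] square_partition_cong[OF S(2) c(2)] \<open>T \<inter> S = {}\<close>
    by (rule square_partition_union)
  moreover have "vertex_sum (T \<union> S) c z = vertex_sum T a z + vertex_sum S b z" for z
    using vertex_sum_union[OF fin \<open>T \<inter> S = {}\<close>, of c z] vertex_sum_cong[OF c(1)] vertex_sum_cong[OF c(2)]
    by simp
  moreover have "vertex_sum S b z = 0" if "z \<in> set V" for z
  proof -
    have "z \<notin> set (u # W @ [v])" using d that by auto
    then show ?thesis by (rule vertex_sum_outside_polygon[OF S(1)])
  qed
  moreover have "vertex_sum T a z = 0" if "z \<in> set W" for z
  proof -
    have "z \<notin> set (V @ [u, v])" using d that by auto
    then show ?thesis by (rule vertex_sum_outside_polygon[OF T(1)])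
  qed
  moreover have "C = map (vertex_sum T a) V" "x = vertex_sum T a u" "y = vertex_sum T a v"
    using cs by simp_all
  ultimately show ?thesis unfolding realizable_def by (intro exI[of _ "T \<union> S"] exI[of _ c] exI[of _ "P \<union> Q"]) simp
qed

lemma realizable_add_ear:
  assumes "realizable (V @ [u, v]) (C @ [p - e, q - e])" "e \<in> {1, -1}" "distinct (V @ [u, w, v])"
  shows "realizable (V @ [u, w, v]) (C @ [p, e, q])"
proof -
  have "triangulation (u # [] @ w # [] @ [v]) (insert {u, w, v} ({} \<union> {}))"
    by (rule triangulation_join) (simp_all add: triangulation.two)
  then have S: "triangulation (u # [w] @ [v]) {{u, w, v}}" by simp
  have Q: "square_partition {{u, w, v}} (\<lambda>_. e) {}"
    using assms(2) by (auto simp: square_partition_def)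
  have "vertex_sum {{u, w, v}} (\<lambda>_. e) z = e" if "z \<in> {u, w, v}" for z
    using that by (auto simp: vertex_sum_insert)
  then show ?thesis
    using realizable_glue[OF assms(1) S Q] assms(3) by simp
qed

lemma realizable_add_square:
  assumes "realizable (V @ [i, j]) (C @ [p + b, q])" "b \<notin> {1, -1}" "distinct (V @ [i, k, l, j])"
  shows "realizable (V @ [i, k, l, j]) (C @ [p, 0, b, q])"
proof -
  define t1 t2 where "t1 = {i, k, j}" and "t2 = {k, l, j}"
  define lab where "lab t = (if t = t1 then - b else b)" for t
  have d: "i \<noteq> k" "i \<noteq> l" "i \<noteq> j" "k \<noteq> l" "k \<noteq> j" "l \<noteq> j" using assms(3) by auto
  have "triangulation (k # [] @ l # [] @ [j]) (insert {k, l, j} ({} \<union> {}))"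
    by (rule triangulation_join) (simp_all add: triangulation.two)
  then have "triangulation (i # [] @ k # [l] @ [j]) (insert {i, k, j} ({} \<union> {{k, l, j}}))"
    by (intro triangulation_join) (simp_all add: triangulation.two)
  then have S: "triangulation (i # [k, l] @ [j]) {t1, t2}" by (simp add: t1_def t2_def)
  have t12: "t1 \<noteq> t2" "t1 \<inter> t2 = {k, j}" using d by (auto simp: t1_def t2_def)
  have Q: "square_partition {t1, t2} lab {{t1, t2}}"
  proof (rule square_partitionI)
    show "\<Union>{{t1, t2}} = {t \<in> {t1, t2}. lab t \<notin> {1, -1}}" using assms(2) by (auto simp: lab_def)
    show "\<exists>s1 s2. p = {s1, s2} \<and> s1 \<noteq> s2 \<and> card (s1 \<inter> s2) = 2 \<and> lab s1 = - lab s2"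
      if "p \<in> {{t1, t2}}" for p
      using that t12 d by (intro exI[of _ t1] exI[of _ t2]) (simp add: lab_def)
  qed simp
  have "vertex_sum {t1, t2} lab i = - b" "vertex_sum {t1, t2} lab k = 0"
    "vertex_sum {t1, t2} lab l = b" "vertex_sum {t1, t2} lab j = 0"
    using d t12(1) by (simp_all add: vertex_sum_insert lab_def t1_def t2_def)
  then show ?thesis
    using realizable_glue[OF assms(1) S Q] assms(3) by simp
qed

lemma nth_rotate_to_end:
  assumes "i < length xs" "0 < k" "k \<le> length xs"
  shows "rotate (i + k) xs ! (length xs - k) = xs ! i"
proof -
  have "(i + k + (length xs - k)) mod length xs = i" using assms by simp
  then show ?thesis using assms by (simp add: nth_rotate)
qed

lemma last_three_exhaust:
  assumes "3 \<le> length xs" obtains ys a b c where "xs = ys @ [a, b, c]"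
proof -
  define zs where "zs = drop (length xs - 3) xs"
  have "length zs = 3" using assms by (simp add: zs_def)
  then obtain a b c where "zs = [a, b, c]" by (auto simp: numeral_3_eq_3 length_Suc_conv)
  then have "xs = take (length xs - 3) xs @ [a, b, c]"
    using append_take_drop_id[of "length xs - 3" xs] by (simp add: zs_def)
  then show ?thesis by (rule that)
qed

lemma last_four_exhaust:
  assumes "4 \<le> length xs" obtains ys a b c d where "xs = ys @ [a, b, c, d]"
proof -
  define zs where "zs = drop (length xs - 4) xs"
  have "length zs = 4" using assms by (simp add: zs_def)
  then obtain a b c d where "zs = [a, b, c, d]" by (auto simp: numeral_eq_Suc length_Suc_conv)
  then have "xs = take (length xs - 4) xs @ [a, b, c, d]"
    using append_take_drop_id[of "length xs - 4" xs] by (simp add: zs_def)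
  then show ?thesis by (rule that)
qed

lemma realizable_by_ear:
  assumes IH: "\<And>cs' vs'. length cs' < length cs \<Longrightarrow> signed_quiddity cs' \<Longrightarrow> 2 \<le> length cs' \<Longrightarrow>
      distinct vs' \<Longrightarrow> length vs' = length cs' \<Longrightarrow> realizable vs' cs'"
    and cs: "signed_quiddity cs" "3 \<le> length cs" "i < length cs" "cs ! i \<in> {1, -1}"
    and vs: "distinct vs" "length vs = length cs"
  shows "realizable vs cs"
proof -
  define r where "r = i + 2"
  obtain C p e q where C: "rotate r cs = C @ [p, e, q]"
    by (rule last_three_exhaust[of "rotate r cs"]) (use cs(2) in simp_all)
  obtain V u w v where V: "rotate r vs = V @ [u, w, v]"
    by (rule last_three_exhaust[of "rotate r vs"]) (use cs(2) vs(2) in simp_all)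
  have len: "length cs = length C + 3" "length V = length C"
    using arg_cong[OF C, of length] arg_cong[OF V, of length] vs(2) by simp_all
  have "e = cs ! i"
    using nth_rotate_to_end[of i cs 2] cs(3) len C by (simp add: nth_append r_def)
  moreover have "signed_quiddity (C @ [p, e, q])"
    using signed_quiddity_rotate[OF cs(1), of r] C by simp
  ultimately have "signed_quiddity (C @ [p - e, q - e])"
    using signed_quiddity_contract_unit cs(4) by simp
  moreover have "distinct (V @ [u, w, v])" using V vs(1) by (metis distinct_rotate)
  ultimately have "realizable (V @ [u, v]) (C @ [p - e, q - e])"
    using IH len by simp
  then have "realizable (rotate r vs) (rotate r cs)"
    using realizable_add_ear \<open>e = cs ! i\<close> cs(4) \<open>distinct (V @ [u, w, v])\<close> C V by simp
  then show ?thesis using vs(2) by (rule realizable_unrotate)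
qed

lemma realizable_by_square:
  assumes IH: "\<And>cs' vs'. length cs' < length cs \<Longrightarrow> signed_quiddity cs' \<Longrightarrow> 2 \<le> length cs' \<Longrightarrow>
      distinct vs' \<Longrightarrow> length vs' = length cs' \<Longrightarrow> realizable vs' cs'"
    and cs: "signed_quiddity cs" "4 \<le> length cs" "i < length cs" "cs ! i = 0"
      "\<forall>c\<in>set cs. c \<notin> {1, -1}"
    and vs: "distinct vs" "length vs = length cs"
  shows "realizable vs cs"
proof -
  define r where "r = i + 3"
  obtain C p z b q where C: "rotate r cs = C @ [p, z, b, q]"
    by (rule last_four_exhaust[of "rotate r cs"]) (use cs(2) in simp_all)
  obtain V i' k l j where V: "rotate r vs = V @ [i', k, l, j]"
    by (rule last_four_exhaust[of "rotate r vs"]) (use cs(2) vs(2) in simp_all)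
  have len: "length cs = length C + 4" "length V = length C"
    using arg_cong[OF C, of length] arg_cong[OF V, of length] vs(2) by simp_all
  have "z = 0"
    using nth_rotate_to_end[of i cs 3] cs(3,4) len C by (simp add: nth_append r_def)
  moreover have "signed_quiddity (C @ [p, z, b, q])"
    using signed_quiddity_rotate[OF cs(1), of r] C by simp
  ultimately have "signed_quiddity (C @ [p + b, q])"
    using signed_quiddity_contract_zero by simp
  moreover have "distinct (V @ [i', k, l, j])" using V vs(1) by (metis distinct_rotate)
  ultimately have "realizable (V @ [i', j]) (C @ [p + b, q])"
    using IH len by simp
  moreover have "b \<notin> {1, -1}"
    using cs(5) arg_cong[OF C, of set] by auto
  ultimately have "realizable (rotate r vs) (rotate r cs)"
    using realizable_add_square \<open>z = 0\<close> \<open>distinct (V @ [i', k, l, j])\<close> C V by simp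
  then show ?thesis using vs(2) by (rule realizable_unrotate)
qed

lemma realizable_pair: "signed_quiddity [c, d] \<Longrightarrow> realizable [u, v] [c, d]"
proof -
  assume "signed_quiddity [c, d]"
  then have "c = 0" "d = 0" using signed_quiddity_pair by blast+
  moreover have "square_partition {} (\<lambda>_. 0) {}" by (simp add: square_partition_def)
  ultimately show ?thesis
    unfolding realizable_def using triangulation.two[of u v] by fastforce
qed

lemma signed_quiddity_without_units:
  assumes "signed_quiddity cs" "3 \<le> length cs" "\<forall>c\<in>set cs. c \<notin> {1, -1}"
  shows "4 \<le> length cs" "0 \<in> set cs"
proof -
  have "cs \<noteq> []" using assms(2) by auto
  then have "\<not> (\<forall>c\<in>set cs. c \<notin> {-1, 0, 1})"
    using not_signed_quiddity_large_entries assms(1) by blast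
  then show "0 \<in> set cs" using assms(3) by auto
  have "length cs \<noteq> 3"
  proof
    assume "length cs = 3"
    then obtain c d e where cs: "cs = [c, d, e]" by (auto simp: numeral_3_eq_3 length_Suc_conv)
    then have "d \<in> {1, -1}" using signed_quiddity_triple assms(1) by blast
    then show False using assms(3) cs by simp
  qed
  then show "4 \<le> length cs" using assms(2) by simp
qed

lemma realizable_signed_quiddity:
  "signed_quiddity cs \<Longrightarrow> 2 \<le> length cs \<Longrightarrow> distinct vs \<Longrightarrow> length vs = length cs \<Longrightarrow>
   realizable vs cs"
proof (induction "length cs" arbitrary: cs vs rule: less_induct)
  case less
  have IH: "\<And>cs' vs'. length cs' < length cs \<Longrightarrow> signed_quiddity cs' \<Longrightarrow> 2 \<le> length cs' \<Longrightarrow>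
      distinct vs' \<Longrightarrow> length vs' = length cs' \<Longrightarrow> realizable vs' cs'"
    using less.hyps by blast
  show ?case
  proof (cases "length cs = 2")
    case True
    then obtain c d u v where "cs = [c, d]" "vs = [u, v]"
      using less.prems(4) by (auto simp: numeral_2_eq_2 length_Suc_conv)
    then show ?thesis using realizable_pair less.prems(1) by blast
  next
    case False
    then have "3 \<le> length cs" using less.prems(2) by simp
    show ?thesis
    proof (cases "\<exists>c\<in>set cs. c \<in> {1, -1}")
      case True
      then obtain i where "i < length cs" "cs ! i \<in> {1, -1}" by (auto simp: in_set_conv_nth)
      then show ?thesis
        using \<open>3 \<le> length cs\<close> less.prems by (intro realizable_by_ear[OF IH]) simp_all
    next
      case False
      then have no_unit: "\<forall>c\<in>set cs. c \<notin> {1, -1}" by blast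
      note zero = signed_quiddity_without_units[OF less.prems(1) \<open>3 \<le> length cs\<close> no_unit]
      then obtain i where "i < length cs" "cs ! i = 0" by (auto simp: in_set_conv_nth)
      then show ?thesis
        using zero no_unit less.prems by (intro realizable_by_square[OF IH]) simp_all
    qed
  qed
qed

lemma admissible_of_quiddity_cycle:
  assumes "quiddity_cycle cs"
  shows "\<exists>T a. triangulation [1..<length cs + 1] T \<and> admissible T a \<and> cs = vertex_sums (length cs) T a"
proof -
  have prod: "prod_eta cs = mat (-1)" using assms by (simp add: quiddity_cycle_iff)
  then have signed: "signed_quiddity cs" by (simp add: signed_quiddity_def)
  have "2 \<le> length cs"
  proof (cases cs)
    case (Cons c cs')
    then show ?thesis
      using signed not_signed_quiddity_singleton by (cases cs') auto
  qed (use prod in \<open>simp add: mat_M2\<close>)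
  then have "realizable [1..<length cs + 1] cs"
    using realizable_signed_quiddity[OF signed] by simp
  then obtain T a P where T: "triangulation [1..<length cs + 1] T" "square_partition T a P"
      and cs: "cs = map (vertex_sum T a) [1..<length cs + 1]"
    unfolding realizable_def by blast
  have "product_by_weight [1..<length cs + 1] T a"
    using product_by_weight_triangulation T by simp
  then have "even (label_weight T a)" "weight_sign (label_weight T a) = 1"
    using prod cs by (auto simp: product_by_weight_def mat_M2)
  then have "4 dvd label_weight T a" by (simp add: weight_sign_eq_one_iff)
  moreover have "squares_condition T a" using T(2) squares_condition_iff by blast
  ultimately have "admissible T a"
    using admissible_iff_weight[OF triangulation_finite[OF T(1)]] by simp
  then show ?thesis unfolding vertex_sums_eq using T(1) cs by blast
qed

theorem theorem7p3:
  shows "(\<forall>m::nat. \<forall>T a. 2 \<le> m \<and> triangulation [1..<m+1] T \<and> admissible T a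
            \<longrightarrow> quiddity_cycle (vertex_sums m T a))
       \<and> (\<forall>cs. quiddity_cycle cs \<longrightarrow>
            (\<exists>T a. triangulation [1..<length cs + 1] T \<and> admissible T a
                   \<and> cs = vertex_sums (length cs) T a))"
  using quiddity_cycle_of_admissible admissible_of_quiddity_cycle by blast

end
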